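(* Let $W$ be the Witt algebra with basis $\{x_n\mid n\in\mathbb{Z}\}$ and bracket $[x_m,x_n]=(n-m)x_{m+n}$, and let $V$ be a left-symmetric algebra structure on the underlying space of $W$ with product $x_mx_n=f(m,n)x_{m+n}$ for some $f:\mathbb{Z}\times\mathbb{Z}\to\mathbb{C}$ and with $x_mx_n-x_nx_m=(n-m)x_{m+n}$. Regard $V$ as a $W$-module via left multiplication. Then for no $\alpha\in\mathbb{C}$ is $V$ isomorphic as a $W$-module to $A_\alpha$, the $W$-module with basis $\{v_n\mid n\in\mathbb{Z}\}$ and action $x_iv_n=(n+i)v_{n+i}$ for $n\neq0$, $x_iv_0=i(\alpha+i)v_i$.
   Context: A left-symmetric algebra is a vector space with bilinear product satisfying $(xy)z-x(yz)=(yx)z-y(xz)$; left multiplication then gives a representation of the commutator Lie algebra. *)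

theory Defs
  imports Complex_Main
begin

text \<open>Vectors of a complex vector space with basis indexed by the integers are
  represented as finitely supported functions int \<Rightarrow> complex
  (coefficient of the n-th basis vector).\<close>

definition fin_supp :: "(int \<Rightarrow> complex) set" where
  "fin_supp = {v. finite {n. v n \<noteq> 0}}"

text \<open>The product x_m x_n = f(m,n) x_{m+n} is a left-symmetric algebra structure
  (bilinearity reduces the identity to basis elements).\<close>
definition left_symmetric_coeffs :: "(int \<Rightarrow> int \<Rightarrow> complex) \<Rightarrow> bool" where
  "left_symmetric_coeffs f \<longleftrightarrow>
     (\<forall>a b c. f a b * f (a + b) c - f b c * f a (b + c)
             = f b a * f (b + a) c - f a c * f b (a + c))"

definition witt_commutator :: "(int \<Rightarrow> int \<Rightarrow> complex) \<Rightarrow> bool" where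
  "witt_commutator f \<longleftrightarrow> (\<forall>m n. f m n - f n m = of_int (n - m))"

text \<open>Left multiplication by x_i on V: x_i (\<Sum> v_k x_k) = \<Sum> v_k f(i,k) x_{i+k}.\<close>
definition lmult :: "(int \<Rightarrow> int \<Rightarrow> complex) \<Rightarrow> int \<Rightarrow> (int \<Rightarrow> complex) \<Rightarrow> (int \<Rightarrow> complex)" where
  "lmult f i v = (\<lambda>k. f i (k - i) * v (k - i))"

text \<open>Coefficient of the action of W on A_alpha: x_i v_n = c(i,n) v_{n+i}.\<close>
definition A_coeff :: "complex \<Rightarrow> int \<Rightarrow> int \<Rightarrow> complex" where
  "A_coeff \<alpha> i n = (if n \<noteq> 0 then of_int (n + i) else of_int i * (\<alpha> + of_int i))"

definition A_act :: "complex \<Rightarrow> int \<Rightarrow> (int \<Rightarrow> complex) \<Rightarrow> (int \<Rightarrow> complex)" where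
  "A_act \<alpha> i v = (\<lambda>k. A_coeff \<alpha> i (k - i) * v (k - i))"

text \<open>A W-module isomorphism between two modules on the space fin_supp, given by the
  actions of basis elements x_i (which determine the action of all of W by linearity).\<close>
definition W_module_iso ::
  "(int \<Rightarrow> (int \<Rightarrow> complex) \<Rightarrow> (int \<Rightarrow> complex)) \<Rightarrow> (int \<Rightarrow> (int \<Rightarrow> complex) \<Rightarrow> (int \<Rightarrow> complex))
   \<Rightarrow> ((int \<Rightarrow> complex) \<Rightarrow> (int \<Rightarrow> complex)) \<Rightarrow> bool" where
  "W_module_iso act1 act2 \<phi> \<longleftrightarrow>
     bij_betw \<phi> fin_supp fin_supp
   \<and> (\<forall>u\<in>fin_supp. \<forall>v\<in>fin_supp. \<phi> (\<lambda>k. u k + v k) = (\<lambda>k. \<phi> u k + \<phi> v k))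
   \<and> (\<forall>c. \<forall>v\<in>fin_supp. \<phi> (\<lambda>k. c * v k) = (\<lambda>k. c * \<phi> v k))
   \<and> (\<forall>i. \<forall>v\<in>fin_supp. \<phi> (act1 i v) = act2 i (\<phi> v))"

end

theory Submission
  imports Defs
begin

text \<open>An isomorphism \<open>\<phi> : V \<rightarrow> A\<^sub>\<alpha>\<close> sends each basis vector \<open>x\<^sub>n\<close> to an eigenvector of
  \<open>x\<^sub>0\<close>; since \<open>x\<^sub>0\<close> acts diagonally on \<open>A\<^sub>\<alpha>\<close> with distinct eigenvalues, \<open>\<phi>(x\<^sub>n)\<close> is a
  multiple of a single \<open>v\<^sub>p\<close>, \<open>p = weight n\<close>. The action of the \<open>x\<^sub>i\<close> forces the weight to be a shift away
  from the exceptional vector \<open>v\<^sub>0\<close>, and one sees that some \<open>x\<^sub>z\<close> is sent to a multiple of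
  \<open>v\<^sub>0\<close>. But \<open>v\<^sub>0\<close> is not reached by \<open>x\<^sub>m v\<^bsub>-m\<^esub> = 0\<close>, so \<open>x\<^sub>m x\<^sub>n = 0 = x\<^sub>n x\<^sub>m\<close> whenever
  \<open>m + n = z\<close> and \<open>m, n \<noteq> 0\<close>, contradicting \<open>x\<^sub>m x\<^sub>n - x\<^sub>n x\<^sub>m = (n - m) x\<^sub>z\<close> for \<open>m \<noteq> n\<close>.\<close>

definition basis_vec :: "int \<Rightarrow> int \<Rightarrow> complex" where
  "basis_vec n = (\<lambda>k. if k = n then 1 else 0)"

lemma basis_vec_fin_supp: "basis_vec n \<in> fin_supp"
proof -
  have "{k. basis_vec n k \<noteq> 0} = {n}" by (auto simp: basis_vec_def)
  then show ?thesis unfolding fin_supp_def by simp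
qed

lemma zero_fin_supp: "(\<lambda>_. 0) \<in> fin_supp"
  unfolding fin_supp_def by simp

lemma lmult_basis_vec: "lmult f i (basis_vec n) = (\<lambda>k. f i n * basis_vec (n + i) k)"
  unfolding lmult_def basis_vec_def by (auto simp: fun_eq_iff)

lemma A_coeff_0_left [simp]: "A_coeff \<alpha> 0 p = of_int p"
  by (simp add: A_coeff_def)

lemma A_coeff_opposite: "i \<noteq> 0 \<Longrightarrow> A_coeff \<alpha> i (- i) = 0"
  by (simp add: A_coeff_def)

lemma A_coeff_nonzero: "p \<noteq> 0 \<Longrightarrow> p + i \<noteq> 0 \<Longrightarrow> A_coeff \<alpha> i p \<noteq> 0"
  unfolding A_coeff_def by (metis of_int_0_eq_iff)

lemma W_module_iso_zero:
  assumes "W_module_iso act1 act2 \<phi>"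
  shows "\<phi> (\<lambda>_. 0) = (\<lambda>_. 0)"
proof -
  have "\<phi> (\<lambda>k. 0 * v k) = (\<lambda>k. 0 * \<phi> v k)" if "v \<in> fin_supp" for v
    using assms that unfolding W_module_iso_def by blast
  from this[OF zero_fin_supp] show ?thesis by simp
qed

lemma W_module_iso_nonzero:
  assumes "W_module_iso act1 act2 \<phi>" and "v \<in> fin_supp" and "v \<noteq> (\<lambda>_. 0)"
  shows "\<phi> v \<noteq> (\<lambda>_. 0)"
proof
  assume "\<phi> v = (\<lambda>_. 0)"
  then have "\<phi> v = \<phi> (\<lambda>_. 0)" using W_module_iso_zero[OF assms(1)] by simp
  moreover have "inj_on \<phi> fin_supp"
    using assms(1) unfolding W_module_iso_def bij_betw_def by blast
  ultimately show False
    using assms(2,3) zero_fin_supp by (auto dest: inj_onD)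
qed

text \<open>\<open>w n\<close> stands for \<open>\<phi>(x\<^sub>n)\<close>, the image of a basis vector of \<open>V\<close> in \<open>A\<^sub>\<alpha>\<close>.\<close>

locale intertwined_basis =
  fixes f :: "int \<Rightarrow> int \<Rightarrow> complex" and \<alpha> :: complex and w :: "int \<Rightarrow> int \<Rightarrow> complex"
  assumes intertwine: "f i n * w (n + i) p = A_coeff \<alpha> i (p - i) * w n (p - i)"
    and image_nonzero: "w n \<noteq> (\<lambda>_. 0)"
begin

lemma eigenvalue_at_support: "w n p \<noteq> 0 \<Longrightarrow> f 0 n = of_int p"
  using intertwine[of 0 n p] by simp

lemma support_unique: "w n p \<noteq> 0 \<Longrightarrow> w n q \<noteq> 0 \<Longrightarrow> p = q"
  using eigenvalue_at_support by (metis of_int_eq_iff)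

definition weight :: "int \<Rightarrow> int" where
  "weight n = (THE p. w n p \<noteq> 0)"

lemma nonzero_iff_weight: "w n p \<noteq> 0 \<longleftrightarrow> p = weight n"
proof -
  obtain q where q: "w n q \<noteq> 0" using image_nonzero[of n] by auto
  then have "weight n = q"
    unfolding weight_def using support_unique by blast
  then show ?thesis using q support_unique by blast
qed

lemma weight_shift:
  assumes "weight n \<noteq> 0" and "weight n + i \<noteq> 0"
  shows "weight (n + i) = weight n + i"
proof -
  have "f i n * w (n + i) (weight n + i) = A_coeff \<alpha> i (weight n) * w n (weight n)"
    using intertwine[of i n "weight n + i"] by simp
  also have "\<dots> \<noteq> 0"
    using A_coeff_nonzero[OF assms] nonzero_iff_weight by simp
  finally show ?thesis using nonzero_iff_weight by auto
qed

lemma weight_zero_exists: "\<exists>z. weight z = 0"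
proof (cases "weight 0 = 0")
  case False
  define z where "z = - weight 0"
  have "weight z = 0"
  proof (rule ccontr)
    assume s: "weight z \<noteq> 0"
    \<comment> \<open>Shifting from \<open>0\<close> and from \<open>z\<close> computes \<open>weight (z + weight z)\<close> in two ways.\<close>
    have "weight (z + weight z) = 2 * weight z"
      using weight_shift[OF s, of "weight z"] s by simp
    moreover have "weight (0 + (z + weight z)) = weight z"
      using weight_shift[OF False, of "z + weight z"] s by (simp add: z_def)
    ultimately show False using s by simp
  qed
  then show ?thesis ..
qed blast

lemma product_vanishes:
  assumes "weight (m + n) = 0" and "m \<noteq> 0"
  shows "f m n = 0"
proof -
  have "f m n * w (n + m) 0 = A_coeff \<alpha> m (- m) * w n (- m)"
    using intertwine[of m n 0] by simp
  then have "f m n * w (m + n) 0 = 0"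
    using A_coeff_opposite[OF assms(2)] by (simp add: add.commute)
  moreover have "w (m + n) 0 \<noteq> 0" using assms(1) nonzero_iff_weight by simp
  ultimately show ?thesis by simp
qed

end

lemma W_module_iso_intertwined_basis:
  assumes iso: "W_module_iso (lmult f) (A_act \<alpha>) \<phi>"
  shows "intertwined_basis f \<alpha> (\<lambda>n. \<phi> (basis_vec n))"
proof
  fix i n p
  have scale: "\<phi> (\<lambda>k. c * v k) = (\<lambda>k. c * \<phi> v k)" if "v \<in> fin_supp" for c v
    using iso that unfolding W_module_iso_def by blast
  have "(\<lambda>k. f i n * \<phi> (basis_vec (n + i)) k) = \<phi> (lmult f i (basis_vec n))"
    by (simp add: lmult_basis_vec scale basis_vec_fin_supp)
  also have "\<dots> = A_act \<alpha> i (\<phi> (basis_vec n))"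
    using iso basis_vec_fin_supp unfolding W_module_iso_def by blast
  finally show "f i n * \<phi> (basis_vec (n + i)) p
      = A_coeff \<alpha> i (p - i) * \<phi> (basis_vec n) (p - i)"
    unfolding A_act_def by (rule fun_cong)
next
  fix n
  have "basis_vec n \<noteq> (\<lambda>_. 0)" by (auto simp: basis_vec_def fun_eq_iff)
  then show "\<phi> (basis_vec n) \<noteq> (\<lambda>_. 0)"
    using W_module_iso_nonzero[OF iso basis_vec_fin_supp] by blast
qed

theorem theorem3p6:
  fixes f :: "int \<Rightarrow> int \<Rightarrow> complex"
  assumes "left_symmetric_coeffs f"
    and "witt_commutator f"
  shows "\<not> (\<exists>\<alpha> \<phi>. W_module_iso (lmult f) (A_act \<alpha>) \<phi>)"
proof
  assume "\<exists>\<alpha> \<phi>. W_module_iso (lmult f) (A_act \<alpha>) \<phi>"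
  then obtain \<alpha> \<phi> where "W_module_iso (lmult f) (A_act \<alpha>) \<phi>" by blast
  then interpret intertwined_basis f \<alpha> "\<lambda>n. \<phi> (basis_vec n)"
    by (rule W_module_iso_intertwined_basis)
  obtain z where z: "weight z = 0" using weight_zero_exists ..
  define n where "n = \<bar>z\<bar> + 1"
  define m where "m = z - n"
  have "m \<noteq> 0" "n \<noteq> 0" "m \<noteq> n" "m + n = z" "n + m = z"
    unfolding m_def n_def by auto
  then have "f m n = 0" and "f n m = 0"
    using product_vanishes z by metis+
  moreover have "f m n - f n m = of_int (n - m)"
    using assms(2) unfolding witt_commutator_def by blast
  ultimately show False using \<open>m \<noteq> n\<close> by simp
qed

end
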